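(* Let $n,m\geq1$, $\mathbf{S}\in\mathbb{R}^{n\times m}$, let $\mathbf{w}$ be a random vector in $\mathbb{R}^n$ with logconcave density $p_{\mathbf{w}}$ and law $P_{\mathbf{w}}$, and let $Q:\mathbb{R}^n\to\mathcal{Z}$ be a convex quantizer. For $z\in\mathcal{Z}$ consider the quantized-data likelihood $\mathcal{L}(\mathbf{x},\boldsymbol{\Psi};z)=P_{\mathbf{w}}[\mathcal{W}(z,\mathbf{x},\boldsymbol{\Psi})]$ of the model $z=Q(\boldsymbol{\Psi}^{-1}(\mathbf{S}\mathbf{x}+\mathbf{w}))$. Then for every $z\in\mathcal{Z}$: (a) for each fixed $\boldsymbol{\Psi}_0\in\mathcal{P}_n$, the map $\mathbf{x}\mapsto\mathcal{L}(\mathbf{x},\boldsymbol{\Psi}_0;z)$ is logconcave on $\mathbb{R}^m$; (b) the map $(\mathbf{x},\psi)\mapsto\mathcal{L}(\mathbf{x},\psi\mathbf{I}_n;z)$ is jointly logconcave on $\mathbb{R}^m\times(0,\infty)$; (c) if moreover every quantization region is a box, i.e. for every $z\in\mathcal{Z}$ there are $a_j(z)\le b_j(z)$ in $\mathbb{R}\cup\{-\infty,+\infty\}$ with $Q^{-1}(z)=\prod_{j=1}^n[a_j(z),b_j(z)]$ (intervals intersected with $\mathbb{R}$), then $(\mathbf{x},\boldsymbol{\Lambda})\mapsto\mathcal{L}(\mathbf{x},\boldsymbol{\Lambda};z)$ is jointly logconcave on $\mathbb{R}^m\times\{\text{diagonal } n\times n \text{ matrices with positive diagonal entries}\}$. Here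 a function $f$ on a convex set $D$ is logconcave if $f(\alpha u_1+(1-\alpha)u_0)\ge f(u_1)^\alpha f(u_0)^{1-\alpha}$ for all $u_0,u_1\in D$, $\alpha\in[0,1]$.
   Context: $\mathcal{P}_n$ denotes the set of $n\times n$ real symmetric positive-definite matrices; $\mathbf{I}_n$ is the identity. A density $p_{\mathbf{w}}$ on $\mathbb{R}^n$ is logconcave if $p_{\mathbf{w}}(\alpha\mathbf{w}_1+(1-\alpha)\mathbf{w}_0)\geq p_{\mathbf{w}}(\mathbf{w}_1)^{\alpha}p_{\mathbf{w}}(\mathbf{w}_0)^{1-\alpha}$ for all $\alpha\in[0,1]$, $\mathbf{w}_0,\mathbf{w}_1\in\mathbb{R}^n$; $P_{\mathbf{w}}$ is the probability measure with density $p_{\mathbf{w}}$. A quantizer is any map $Q:\mathbb{R}^n\to\mathcal{Z}$ with $\mathcal{Z}$ countable; it is a convex quantizer if $Q^{-1}(z)$ is a convex set for every $z\in\mathcal{Z}$. For $z\in\mathcal{Z}$, $\mathbf{x}\in\mathbb{R}^m$, $\boldsymbol{\Psi}\in\mathcal{P}_n$, define the noise region $\mathcal{W}(z,\mathbf{x},\boldsymbol{\Psi}):=\{\mathbf{w}\in\mathbb{R}^n:\boldsymbol{\Psi}^{-1}(\mathbf{S}\mathbf{x}+\mathbf{w})\in Q^{-1}(z)\}=\{\boldsymbol{\Psi}\mathbf{y}-\mathbf{S}\mathbf{x}:\mathbf{y}\in Q^{-1}(z)\}$. *)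

theory Defs
  imports "HOL-Analysis.Analysis" "HOL-Library.Extended_Real"
begin

definition logconcave_on :: "'a::real_vector set \<Rightarrow> ('a \<Rightarrow> real) \<Rightarrow> bool" where
  "logconcave_on D f \<longleftrightarrow>
     (\<forall>u0\<in>D. \<forall>u1\<in>D. \<forall>\<alpha>\<in>{0..1::real}.
        f (\<alpha> *\<^sub>R u1 + (1 - \<alpha>) *\<^sub>R u0) \<ge> f u1 powr \<alpha> * f u0 powr (1 - \<alpha>))"

definition pos_def_mats :: "(real^'n^'n) set" where
  "pos_def_mats = {A. transpose A = A \<and> (\<forall>v. v \<noteq> 0 \<longrightarrow> v \<bullet> (A *v v) > 0)}"

definition pos_diag_mats :: "(real^'n^'n) set" where
  "pos_diag_mats = {A. (\<forall>i j. i \<noteq> j \<longrightarrow> A $ i $ j = 0) \<and> (\<forall>i. A $ i $ i > 0)}"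

definition convex_quantizer :: "(real^'n \<Rightarrow> 'z::countable) \<Rightarrow> bool" where
  "convex_quantizer Q \<longleftrightarrow> (\<forall>z. convex (Q -` {z}))"

definition noise_region ::
  "(real^'n \<Rightarrow> 'z) \<Rightarrow> real^'m^'n \<Rightarrow> 'z \<Rightarrow> real^'m \<Rightarrow> real^'n^'n \<Rightarrow> (real^'n) set" where
  "noise_region Q S z x \<Psi> = {w. matrix_inv \<Psi> *v (S *v x + w) \<in> Q -` {z}}"

text \<open>Law of w: probability measure with density p (on the Lebesgue sigma-algebra, so that
  convex sets are measurable).\<close>
definition law :: "(real^'n \<Rightarrow> real) \<Rightarrow> (real^'n) measure" where
  "law p = density lebesgue (\<lambda>w. ennreal (p w))"

definition likelihood ::
  "(real^'n \<Rightarrow> real) \<Rightarrow> (real^'n \<Rightarrow> 'z) \<Rightarrow> real^'m^'n \<Rightarrow> 'z \<Rightarrow> real^'m \<Rightarrow> real^'n^'n \<Rightarrow> real" where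
  "likelihood p Q S z x \<Psi> = measure (law p) (noise_region Q S z x \<Psi>)"

end

theory Submission
  imports Defs
begin

text \<open>In each of the three cases the likelihood is \<open>v \<mapsto> P\<^sub>w {w. (w, v) \<in> K}\<close> for a convex set
  \<open>K\<close> of pairs (noise, parameter): in (a) \<open>K\<close> is a linear preimage of the cell \<open>Q -` {z}\<close>, in (b) and (c)
  a linear preimage of the perspective cone \<open>{(u, t). t > 0 \<and> u / t \<in> C}\<close> of the cell, resp. of
  its coordinate intervals, intersected over the coordinates. Then \<open>(w, v) \<mapsto> p w \<cdot> 1\<^sub>K (w, v)\<close> is
  logconcave, and by the Prekopa--Leindler inequality so is its marginal in \<open>v\<close>. Prekopa--Leindler
  is proved in dimension one from the Brunn--Minkowski inequality for the superlevel sets, and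
  carried to \<open>\<real>\<^sup>n\<close> by integrating out one coordinate at a time.\<close>

section \<open>Cavalieri's principle and Brunn--Minkowski on the line\<close>

lemma emeasure_lborel_Ioi: "emeasure lborel {0::real<..} = \<infinity>"
proof -
  have le: "ennreal n \<le> emeasure lborel {0::real<..}" if "n \<ge> 0" for n::real
    using emeasure_mono[of "{0<..n}" "{0<..}" lborel] that by (auto simp: subset_eq)
  show ?thesis
  proof (cases "emeasure lborel {0::real<..}" rule: ennreal_cases)
    case (real r)
    with le[of "r+1"] show ?thesis by (simp add: ennreal_le_iff)
  qed simp
qed

lemma emeasure_lborel_le_ennreal: "emeasure lborel {t::real. 0 < t \<and> ennreal t \<le> v} = v"
proof (cases v)
  case (real r)
  then have "{t::real. 0 < t \<and> ennreal t \<le> v} = {0<..r}"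
    by (auto simp: ennreal_le_iff)
  then show ?thesis using real by simp
next
  case top
  then have "{t::real. 0 < t \<and> ennreal t \<le> v} = {0<..}" by auto
  then show ?thesis using top emeasure_lborel_Ioi by simp
qed

lemma emeasure_lborel_less_ennreal: "emeasure lborel {t::real. 0 < t \<and> ennreal t < v} = v"
proof (cases v)
  case (real r)
  then have "{t::real. 0 < t \<and> ennreal t < v} = {0<..<r}"
    by (auto simp: ennreal_less_iff)
  then show ?thesis using real by simp
next
  case top
  then have "{t::real. 0 < t \<and> ennreal t < v} = {0<..}" by auto
  then show ?thesis using top emeasure_lborel_Ioi by simp
qed

text \<open>Cavalieri's principle: integrate the indicator of the region under the graph first
  vertically, then horizontally.\<close>

lemma nn_integral_eq_integral_superlevel:
  fixes h :: "real \<Rightarrow> ennreal" and R :: "ennreal \<Rightarrow> ennreal \<Rightarrow> bool"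
  assumes R_meas: "{p::real \<times> real. 0 < snd p \<and> R (ennreal (snd p)) (h (fst p))} \<in> sets (lborel \<Otimes>\<^sub>M lborel)"
    and R_levels: "\<And>v. emeasure lborel {t::real. 0 < t \<and> R (ennreal t) v} = v"
  shows "(\<integral>\<^sup>+x. h x \<partial>lborel) = (\<integral>\<^sup>+t. indicator {0<..} t * emeasure lborel {x. R (ennreal t) (h x)} \<partial>lborel)"
proof -
  let ?S = "{p::real \<times> real. 0 < snd p \<and> R (ennreal (snd p)) (h (fst p))}"
  have [measurable]: "?S \<in> sets (lborel \<Otimes>\<^sub>M lborel)" by (fact R_meas)
  have "(\<integral>\<^sup>+x. h x \<partial>lborel) = (\<integral>\<^sup>+x. \<integral>\<^sup>+t. indicator ?S (x,t) \<partial>lborel \<partial>lborel)"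
  proof (rule nn_integral_cong)
    fix x
    have "(\<integral>\<^sup>+t. indicator ?S (x,t) \<partial>lborel) = (\<integral>\<^sup>+t. indicator {t. 0 < t \<and> R (ennreal t) (h x)} t \<partial>lborel)"
      by (auto intro!: nn_integral_cong simp: indicator_def)
    also have "\<dots> = h x"
    proof -
      have "Pair x -` ?S = {t. 0 < t \<and> R (ennreal t) (h x)}" by auto
      then have "{t. 0 < t \<and> R (ennreal t) (h x)} \<in> sets lborel"
        using sets_Pair1[OF R_meas, of x] by metis
      then show ?thesis using R_levels by simp
    qed
    finally show "h x = (\<integral>\<^sup>+t. indicator ?S (x,t) \<partial>lborel)" by simp
  qed
  also have "\<dots> = (\<integral>\<^sup>+t. \<integral>\<^sup>+x. indicator ?S (x,t) \<partial>lborel \<partial>lborel)"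
    by (rule lborel_pair.Fubini') measurable
  also have "\<dots> = (\<integral>\<^sup>+t. indicator {0<..} t * emeasure lborel {x. R (ennreal t) (h x)} \<partial>lborel)"
  proof (rule nn_integral_cong)
    fix t
    have "(\<integral>\<^sup>+x. indicator ?S (x,t) \<partial>lborel) = (\<integral>\<^sup>+x. indicator {0<..} t * indicator {x. R (ennreal t) (h x)} x \<partial>lborel)"
      by (auto intro!: nn_integral_cong simp: indicator_def)
    also have "\<dots> = indicator {0<..} t * emeasure lborel {x. R (ennreal t) (h x)}"
    proof -
      have "(\<lambda>x. (x, t)) -` ?S = (if 0 < t then {x. R (ennreal t) (h x)} else {})" by auto
      then have "{x. R (ennreal t) (h x)} \<in> sets lborel" if "0 < t"
        using sets_Pair2[OF R_meas, of t] that by metis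
      then show ?thesis by (cases "0 < t") (simp_all add: nn_integral_cmult)
    qed
    finally show "(\<integral>\<^sup>+x. indicator ?S (x,t) \<partial>lborel) = indicator {0<..} t * emeasure lborel {x. R (ennreal t) (h x)}" .
  qed
  finally show ?thesis .
qed

lemma nn_integral_eq_integral_superlevel_le:
  fixes h :: "real \<Rightarrow> ennreal"
  assumes [measurable]: "h \<in> borel_measurable borel"
  shows "(\<integral>\<^sup>+x. h x \<partial>lborel) = (\<integral>\<^sup>+t. indicator {0<..} t * emeasure lborel {x. ennreal t \<le> h x} \<partial>lborel)"
proof (rule nn_integral_eq_integral_superlevel)
  have "Measurable.pred (lborel \<Otimes>\<^sub>M lborel) (\<lambda>p::real\<times>real. 0 < snd p \<and> ennreal (snd p) \<le> h (fst p))"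
    by measurable
  then show "{p::real \<times> real. 0 < snd p \<and> ennreal (snd p) \<le> h (fst p)} \<in> sets (lborel \<Otimes>\<^sub>M lborel)"
    unfolding pred_def by (simp add: space_pair_measure)
qed (fact emeasure_lborel_le_ennreal)

lemma nn_integral_eq_integral_superlevel_less:
  fixes h :: "real \<Rightarrow> ennreal"
  assumes [measurable]: "h \<in> borel_measurable borel"
  shows "(\<integral>\<^sup>+x. h x \<partial>lborel) = (\<integral>\<^sup>+t. indicator {0<..} t * emeasure lborel {x. ennreal t < h x} \<partial>lborel)"
proof (rule nn_integral_eq_integral_superlevel)
  have "Measurable.pred (lborel \<Otimes>\<^sub>M lborel) (\<lambda>p::real\<times>real. 0 < snd p \<and> ennreal (snd p) < h (fst p))"
    by measurable
  then show "{p::real \<times> real. 0 < snd p \<and> ennreal (snd p) < h (fst p)} \<in> sets (lborel \<Otimes>\<^sub>M lborel)"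
    unfolding pred_def by (simp add: space_pair_measure)
qed (fact emeasure_lborel_less_ennreal)

lemma affine_image_sets_borel:
  fixes A :: "real set"
  assumes "A \<in> sets borel" "a \<noteq> 0"
  shows "(\<lambda>x. a*x + c) ` A \<in> sets borel"
proof -
  have "(\<lambda>x. a*x + c) ` A = (\<lambda>y. (y - c)/a) -` A"
  proof (intro set_eqI iffI)
    fix y assume "y \<in> (\<lambda>y. (y - c)/a) -` A"
    then have "(y - c)/a \<in> A" "y = a * ((y - c)/a) + c" using assms(2) by auto
    then show "y \<in> (\<lambda>x. a*x + c) ` A" by (metis image_eqI)
  qed (use assms(2) in auto)
  also have "\<dots> \<in> sets borel"
  proof -
    have m: "(\<lambda>y::real. (y - c)/a) \<in> borel \<rightarrow>\<^sub>M borel" by measurable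
    show ?thesis using measurable_sets[OF m assms(1)] by simp
  qed
  finally show ?thesis .
qed

lemma emeasure_lborel_affine_image:
  fixes A :: "real set"
  assumes "A \<in> sets borel" "a > 0"
  shows "emeasure lborel ((\<lambda>x. a*x + c) ` A) = ennreal a * emeasure lborel A"
proof -
  have "emeasure lborel ((\<lambda>x. a*x + c) ` A) = emeasure lebesgue ((\<lambda>x. a*x + c) ` A)"
    using affine_image_sets_borel[OF assms(1), of a c] assms by simp
  also have "\<dots> = ennreal a * emeasure lebesgue A"
    using emeasure_lebesgue_affine[of a c A] assms by simp
  also have "\<dots> = ennreal a * emeasure lborel A" using assms by simp
  finally show ?thesis .
qed

lemma emeasure_lborel_Int_affine_images:
  fixes A B :: "real set"
  assumes A: "\<And>x. x \<in> A \<Longrightarrow> x \<le> a0" and B: "\<And>y. y \<in> B \<Longrightarrow> b0 \<le> y" and al: "0 < \<alpha>" "\<alpha> < 1"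
  shows "emeasure lborel ((\<lambda>x. \<alpha>*x + (1-\<alpha>)*b1) ` A \<inter> (\<lambda>y. (1-\<alpha>)*y + \<alpha>*a1) ` B)
      \<le> ennreal (\<alpha>*(a0 - a1) + (1-\<alpha>)*(b1 - b0))"
proof -
  have "(\<lambda>x. \<alpha>*x + (1-\<alpha>)*b1) ` A \<inter> (\<lambda>y. (1-\<alpha>)*y + \<alpha>*a1) ` B \<subseteq> {\<alpha>*a1 + (1-\<alpha>)*b0 .. \<alpha>*a0 + (1-\<alpha>)*b1}"
  proof
    fix z assume "z \<in> (\<lambda>x. \<alpha>*x + (1-\<alpha>)*b1) ` A \<inter> (\<lambda>y. (1-\<alpha>)*y + \<alpha>*a1) ` B"
    then obtain x y where xy: "x \<in> A" "y \<in> B" "z = \<alpha>*x + (1-\<alpha>)*b1" "z = (1-\<alpha>)*y + \<alpha>*a1"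
      by auto
    have "\<alpha>*x \<le> \<alpha>*a0" using A[OF xy(1)] al by simp
    moreover have "(1-\<alpha>)*b0 \<le> (1-\<alpha>)*y" using B[OF xy(2)] al by simp
    ultimately show "z \<in> {\<alpha>*a1 + (1-\<alpha>)*b0 .. \<alpha>*a0 + (1-\<alpha>)*b1}" using xy by auto
  qed
  then have "emeasure lborel ((\<lambda>x. \<alpha>*x + (1-\<alpha>)*b1) ` A \<inter> (\<lambda>y. (1-\<alpha>)*y + \<alpha>*a1) ` B)
      \<le> emeasure lborel {\<alpha>*a1 + (1-\<alpha>)*b0 .. \<alpha>*a0 + (1-\<alpha>)*b1}"
    by (intro emeasure_mono) auto
  also have "\<dots> \<le> ennreal (\<alpha>*(a0 - a1) + (1-\<alpha>)*(b1 - b0))"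
    by (auto simp: emeasure_lborel_Icc_eq algebra_simps)
  finally show ?thesis .
qed

text \<open>With \<open>a1\<close> close to \<open>sup A\<close> and \<open>b1\<close> close to \<open>inf B\<close>, the translates \<open>\<alpha> A + (1-\<alpha>) b1\<close> and
  \<open>(1-\<alpha>) B + \<alpha> a1\<close> lie in \<open>C\<close> and overlap in an interval of length at most \<open>e\<close>.\<close>

lemma brunn_minkowski_real:
  fixes A B C :: "real set"
  assumes AB: "A \<in> sets borel" "B \<in> sets borel" "C \<in> sets borel"
    and ne: "A \<noteq> {}" "B \<noteq> {}" and bd: "bdd_above A" "bdd_below B"
    and al: "0 < \<alpha>" "\<alpha> < 1"
    and sub: "\<And>x y. x \<in> A \<Longrightarrow> y \<in> B \<Longrightarrow> \<alpha>*x + (1-\<alpha>)*y \<in> C"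
  shows "ennreal \<alpha> * emeasure lborel A + ennreal (1-\<alpha>) * emeasure lborel B \<le> emeasure lborel C"
proof (rule ennreal_le_epsilon)
  fix e :: real assume e: "0 < e"
  obtain a1 where a1: "a1 \<in> A" "Sup A - e < a1"
    using less_cSup_iff[OF ne(1) bd(1), of "Sup A - e"] e by auto
  obtain b1 where b1: "b1 \<in> B" "b1 < Inf B + e"
    using cInf_less_iff[OF ne(2) bd(2), of "Inf B + e"] e by auto
  define A' where "A' = (\<lambda>x. \<alpha>*x + (1-\<alpha>)*b1) ` A"
  define B' where "B' = (\<lambda>y. (1-\<alpha>)*y + \<alpha>*a1) ` B"
  have "A' \<in> sets borel" "B' \<in> sets borel"
    unfolding A'_def B'_def using affine_image_sets_borel AB al by auto
  then have "ennreal \<alpha> * emeasure lborel A + ennreal (1-\<alpha>) * emeasure lborel B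
      = emeasure lborel (A' \<union> B') + emeasure lborel (A' \<inter> B')"
    using emeasure_Un_Int[of A' lborel B'] emeasure_lborel_affine_image AB al by (simp add: A'_def B'_def)
  also have "emeasure lborel (A' \<union> B') \<le> emeasure lborel C"
    using sub a1(1) b1(1) AB(3) by (intro emeasure_mono) (auto simp: A'_def B'_def add.commute)
  also have "emeasure lborel (A' \<inter> B') \<le> ennreal (\<alpha>*(Sup A - a1) + (1-\<alpha>)*(b1 - Inf B))"
    unfolding A'_def B'_def using cSup_upper[OF _ bd(1)] cInf_lower[OF _ bd(2)] al
    by (intro emeasure_lborel_Int_affine_images) auto
  also have "\<dots> \<le> ennreal e"
  proof (rule ennreal_leI)
    have "\<alpha>*(Sup A - a1) + (1-\<alpha>)*(b1 - Inf B) \<le> \<alpha>*e + (1-\<alpha>)*e"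
      using a1 b1 al by (intro add_mono mult_left_mono) auto
    then show "\<alpha>*(Sup A - a1) + (1-\<alpha>)*(b1 - Inf B) \<le> e" by (simp add: algebra_simps)
  qed
  finally show "ennreal \<alpha> * emeasure lborel A + ennreal (1-\<alpha>) * emeasure lborel B \<le> emeasure lborel C + ennreal e"
    by (simp add: add_mono)
qed

section \<open>The Prekopa--Leindler inequality on the line\<close>

lemma borel_measurable_emeasure_superlevel:
  fixes f :: "real \<Rightarrow> ennreal"
  assumes [measurable]: "f \<in> borel_measurable borel"
  shows "(\<lambda>t::real. emeasure lborel {x. ennreal (t*q) < f x}) \<in> borel_measurable borel"
proof -
  have "(\<lambda>t::real. \<integral>\<^sup>+x. indicator {x. ennreal (t*q) < f x} x \<partial>lborel) \<in> borel_measurable borel"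
    by measurable
  moreover have "{x. ennreal (t*q) < f x} \<in> sets borel" for t by measurable
  ultimately show ?thesis by simp
qed

lemma nn_integral_superlevel_rescaled:
  fixes f :: "real \<Rightarrow> ennreal"
  assumes [measurable]: "f \<in> borel_measurable borel" and fa: "\<And>x. f x \<le> ennreal a"
    and a: "0 < a" and k: "0 < k"
  shows "(\<integral>\<^sup>+t. indicator {0<..<k} t * emeasure lborel {x. ennreal (t/k*a) < f x} \<partial>lborel)
      = ennreal (k/a) * (\<integral>\<^sup>+x. f x \<partial>lborel)"
proof -
  define F where "F s = indicator {0<..<a} s * emeasure lborel {x. ennreal s < f x}" for s :: real
  have Fm[measurable]: "F \<in> borel_measurable borel"
    unfolding F_def using borel_measurable_emeasure_superlevel[of f 1] by simp
  have "(\<integral>\<^sup>+x. f x \<partial>lborel) = (\<integral>\<^sup>+s. F s \<partial>lborel)"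
    unfolding nn_integral_eq_integral_superlevel_less[OF assms(1)]
  proof (rule nn_integral_cong)
    fix s :: real
    show "indicator {0<..} s * emeasure lborel {x. ennreal s < f x} = F s"
    proof (cases "s < a")
      case False
      then have "{x. ennreal s < f x} = {}" using fa
        by (auto simp: not_less) (metis ennreal_leI leD order.trans)
      then show ?thesis by (simp add: F_def)
    qed (auto simp: F_def indicator_def)
  qed
  also have "\<dots> = ennreal (a/k) * (\<integral>\<^sup>+t. F (0 + (a/k) * t) \<partial>lborel)"
    using nn_integral_real_affine[OF Fm, of "a/k" 0] a k by simp
  also have "(\<integral>\<^sup>+t. F (0 + (a/k) * t) \<partial>lborel) = (\<integral>\<^sup>+t. indicator {0<..<k} t * emeasure lborel {x. ennreal (t/k*a) < f x} \<partial>lborel)"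
  proof (rule nn_integral_cong)
    fix t :: real
    have "(0 < a/k*t \<and> a/k*t < a) \<longleftrightarrow> (0 < t \<and> t < k)" using a k
      by (auto simp: field_simps zero_less_mult_iff)
    then show "F (0 + (a/k) * t) = indicator {0<..<k} t * emeasure lborel {x. ennreal (t/k*a) < f x}"
      by (auto simp: F_def indicator_def mult.commute)
  qed
  finally have "(\<integral>\<^sup>+x. f x \<partial>lborel) = ennreal (a/k) * (\<integral>\<^sup>+t. indicator {0<..<k} t * emeasure lborel {x. ennreal (t/k*a) < f x} \<partial>lborel)" .
  then have "ennreal (k/a) * (\<integral>\<^sup>+x. f x \<partial>lborel) = ennreal (k/a) * ennreal (a/k) * (\<integral>\<^sup>+t. indicator {0<..<k} t * emeasure lborel {x. ennreal (t/k*a) < f x} \<partial>lborel)"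
    by (simp add: mult.assoc)
  also have "ennreal (k/a) * ennreal (a/k) = 1" using a k by (simp flip: ennreal_mult)
  finally show ?thesis by simp
qed

lemma SUP_ennreal_positive_bounded:
  fixes f :: "real \<Rightarrow> ennreal"
  assumes fB: "\<And>x. f x \<le> ennreal K" and pos: "0 < (\<integral>\<^sup>+x. f x \<partial>lborel)"
  obtains a where "(SUP x. f x) = ennreal a" "0 < a"
proof -
  have "(SUP x. f x) \<le> ennreal K" using fB by (simp add: SUP_le_iff)
  then obtain a where a: "(SUP x. f x) = ennreal a" "0 \<le> a"
    by (metis ennreal_cases ennreal_less_top infinity_ennreal_def le_less_trans less_le)
  have "a \<noteq> 0"
  proof
    assume "a = 0"
    then have "f x = 0" for x using a by (metis SUP_upper UNIV_I ennreal_0 le_zero_eq)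
    then show False using pos by simp
  qed
  then show ?thesis using that a by auto
qed

text \<open>The superlevel sets of \<open>f\<close> and \<open>g\<close> at the matching heights \<open>t a / k\<close> and \<open>t b / k\<close>
  (\<open>a\<close>, \<open>b\<close> the suprema) combine into the superlevel set of \<open>h\<close> at height \<open>t\<close>; integrating
  over \<open>t\<close> then bounds \<open>\<integral>h\<close> by a weighted mean of \<open>\<integral>f\<close> and \<open>\<integral>g\<close>.\<close>

lemma brunn_minkowski_superlevel_sets:
  fixes f g h :: "real \<Rightarrow> ennreal"
  assumes [measurable]: "f \<in> borel_measurable borel" "g \<in> borel_measurable borel" "h \<in> borel_measurable borel"
    and al: "0 < \<alpha>" "\<alpha> < 1"
    and H: "\<And>x y c d. 0 < c \<Longrightarrow> 0 < d \<Longrightarrow> ennreal c < f x \<Longrightarrow> ennreal d < g y \<Longrightarrow>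
              ennreal (c powr \<alpha> * d powr (1-\<alpha>)) \<le> h (\<alpha>*x + (1-\<alpha>)*y)"
    and fS: "\<And>x. K < x \<Longrightarrow> f x = 0" and gS: "\<And>x. x < -K \<Longrightarrow> g x = 0"
    and a: "(SUP x. f x) = ennreal a" "0 < a" and b: "(SUP x. g x) = ennreal b" "0 < b"
  defines "k \<equiv> a powr \<alpha> * b powr (1-\<alpha>)"
  assumes t: "0 < t" "t < k"
  shows "ennreal \<alpha> * emeasure lborel {x. ennreal (t/k*a) < f x} + ennreal (1-\<alpha>) * emeasure lborel {x. ennreal (t/k*b) < g x}
      \<le> emeasure lborel {x. ennreal t \<le> h x}"
    (is "ennreal \<alpha> * emeasure lborel ?A + ennreal (1-\<alpha>) * emeasure lborel ?B \<le> emeasure lborel ?C")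
proof (rule brunn_minkowski_real)
  have k: "0 < k" using a b by (simp add: k_def)
  show "?A \<in> sets borel" "?B \<in> sets borel" "?C \<in> sets borel" by measurable
  have r: "0 < t/k" "t/k < 1" using t k by auto
  have "t/k*a < 1*a" using r a by (intro mult_strict_right_mono) auto
  then have "ennreal (t/k*a) < ennreal a" using r a by (intro ennreal_lessI) auto
  then show "?A \<noteq> {}" using a(1) by (metis (mono_tags, lifting) empty_Collect_eq less_SUP_iff)
  have "t/k*b < 1*b" using r b by (intro mult_strict_right_mono) auto
  then have "ennreal (t/k*b) < ennreal b" using r b by (intro ennreal_lessI) auto
  then show "?B \<noteq> {}" using b(1) by (metis (mono_tags, lifting) empty_Collect_eq less_SUP_iff)
  show "bdd_above ?A" unfolding bdd_above_def
    by (rule exI[of _ K]) (metis (mono_tags, lifting) fS mem_Collect_eq not_le not_less_zero)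
  show "bdd_below ?B" unfolding bdd_below_def
    by (rule exI[of _ "-K"]) (metis (mono_tags, lifting) gS mem_Collect_eq not_le not_less_zero)
  show "0 < \<alpha>" "\<alpha> < 1" by fact+
  fix x y assume xy: "x \<in> ?A" "y \<in> ?B"
  have "ennreal ((t/k*a) powr \<alpha> * (t/k*b) powr (1-\<alpha>)) \<le> h (\<alpha>*x + (1-\<alpha>)*y)"
    using xy r a b k t by (intro H) auto
  also have "(t/k*a) powr \<alpha> * (t/k*b) powr (1-\<alpha>) = t"
  proof -
    obtain r where rr: "r = t/k" "0 < r" using r by blast
    have "(r*a) powr \<alpha> * (r*b) powr (1-\<alpha>) = (r powr \<alpha> * r powr (1-\<alpha>)) * k"
      using rr(2) a b unfolding k_def by (simp add: powr_mult)
    also have "r powr \<alpha> * r powr (1-\<alpha>) = r" using rr(2) by (simp flip: powr_add)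
    finally show ?thesis using k rr(1) by simp
  qed
  finally show "\<alpha>*x + (1-\<alpha>)*y \<in> ?C" by simp
qed

lemma prekopa_leindler_real_levels:
  fixes f g h :: "real \<Rightarrow> ennreal"
  assumes [measurable]: "f \<in> borel_measurable borel" "g \<in> borel_measurable borel" "h \<in> borel_measurable borel"
    and al: "0 < \<alpha>" "\<alpha> < 1"
    and H: "\<And>x y c d. 0 < c \<Longrightarrow> 0 < d \<Longrightarrow> ennreal c < f x \<Longrightarrow> ennreal d < g y \<Longrightarrow>
              ennreal (c powr \<alpha> * d powr (1-\<alpha>)) \<le> h (\<alpha>*x + (1-\<alpha>)*y)"
    and fS: "\<And>x. K < x \<Longrightarrow> f x = 0" and gS: "\<And>x. x < -K \<Longrightarrow> g x = 0"
    and a: "(SUP x. f x) = ennreal a" "0 < a" and b: "(SUP x. g x) = ennreal b" "0 < b"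
  defines "k \<equiv> a powr \<alpha> * b powr (1-\<alpha>)"
  shows "ennreal \<alpha> * (ennreal (k/a) * (\<integral>\<^sup>+x. f x \<partial>lborel)) + ennreal (1-\<alpha>) * (ennreal (k/b) * (\<integral>\<^sup>+x. g x \<partial>lborel))
      \<le> (\<integral>\<^sup>+x. h x \<partial>lborel)"
proof -
  have k: "0 < k" using a b by (simp add: k_def)
  have fa: "f x \<le> ennreal a" and gb: "g x \<le> ennreal b" for x
    using a(1) b(1) by (metis SUP_upper UNIV_I)+
  define A where "A t = {x. ennreal (t/k*a) < f x}" for t
  define B where "B t = {x. ennreal (t/k*b) < g x}" for t
  define C where "C t = {x. ennreal t \<le> h x}" for t
  have levels: "ennreal \<alpha> * emeasure lborel (A t) + ennreal (1-\<alpha>) * emeasure lborel (B t) \<le> emeasure lborel (C t)"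
    if "0 < t" "t < k" for t
    unfolding A_def B_def C_def k_def by (rule brunn_minkowski_superlevel_sets[OF assms(1-3) al H fS gS a b that[unfolded k_def]])
  have [measurable]: "(\<lambda>t. emeasure lborel (A t)) \<in> borel_measurable borel"
    unfolding A_def using borel_measurable_emeasure_superlevel[of f "a/k"] by (simp add: field_simps)
  have [measurable]: "(\<lambda>t. emeasure lborel (B t)) \<in> borel_measurable borel"
    unfolding B_def using borel_measurable_emeasure_superlevel[of g "b/k"] by (simp add: field_simps)
  have "ennreal \<alpha> * (ennreal (k/a) * (\<integral>\<^sup>+x. f x \<partial>lborel)) + ennreal (1-\<alpha>) * (ennreal (k/b) * (\<integral>\<^sup>+x. g x \<partial>lborel))
     = ennreal \<alpha> * (\<integral>\<^sup>+t. indicator {0<..<k} t * emeasure lborel (A t) \<partial>lborel)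
       + ennreal (1-\<alpha>) * (\<integral>\<^sup>+t. indicator {0<..<k} t * emeasure lborel (B t) \<partial>lborel)"
    unfolding A_def B_def using nn_integral_superlevel_rescaled[of f a k] nn_integral_superlevel_rescaled[of g b k] a b k fa gb
    by simp
  also have "\<dots> = (\<integral>\<^sup>+t. indicator {0<..<k} t * (ennreal \<alpha> * emeasure lborel (A t) + ennreal (1-\<alpha>) * emeasure lborel (B t)) \<partial>lborel)"
    by (simp add: distrib_left nn_integral_add nn_integral_cmult mult.left_commute)
  also have "\<dots> \<le> (\<integral>\<^sup>+t. indicator {0<..} t * emeasure lborel (C t) \<partial>lborel)"
    using levels by (intro nn_integral_mono) (auto simp: indicator_def)
  also have "\<dots> = (\<integral>\<^sup>+x. h x \<partial>lborel)"
    unfolding C_def by (rule nn_integral_eq_integral_superlevel_le[symmetric]) measurable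
  finally show ?thesis .
qed

lemma prekopa_leindler_real_bounded:
  fixes f g h :: "real \<Rightarrow> ennreal"
  assumes [measurable]: "f \<in> borel_measurable borel" "g \<in> borel_measurable borel" "h \<in> borel_measurable borel"
    and al: "0 < \<alpha>" "\<alpha> < 1"
    and H: "\<And>x y c d. 0 < c \<Longrightarrow> 0 < d \<Longrightarrow> ennreal c < f x \<Longrightarrow> ennreal d < g y \<Longrightarrow>
              ennreal (c powr \<alpha> * d powr (1-\<alpha>)) \<le> h (\<alpha>*x + (1-\<alpha>)*y)"
    and fB: "\<And>x. f x \<le> ennreal K" and gB: "\<And>x. g x \<le> ennreal K"
    and fS: "\<And>x. K < x \<Longrightarrow> f x = 0" and gS: "\<And>x. x < -K \<Longrightarrow> g x = 0"
    and c: "0 < c" "ennreal c < (\<integral>\<^sup>+x. f x \<partial>lborel)"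
    and d: "0 < d" "ennreal d < (\<integral>\<^sup>+x. g x \<partial>lborel)"
  shows "ennreal (c powr \<alpha> * d powr (1-\<alpha>)) \<le> (\<integral>\<^sup>+x. h x \<partial>lborel)"
proof -
  have fpos: "0 < (\<integral>\<^sup>+x. f x \<partial>lborel)" and gpos: "0 < (\<integral>\<^sup>+x. g x \<partial>lborel)"
    using c d by (auto intro: le_less_trans)
  obtain a where a: "(SUP x. f x) = ennreal a" "0 < a"
    using SUP_ennreal_positive_bounded[OF fB fpos] .
  obtain b where b: "(SUP x. g x) = ennreal b" "0 < b"
    using SUP_ennreal_positive_bounded[OF gB gpos] .
  define k where "k = a powr \<alpha> * b powr (1-\<alpha>)"
  have k: "0 < k" using a b by (simp add: k_def)
  have "c powr \<alpha> * d powr (1-\<alpha>) = k * ((c/a) powr \<alpha> * (d/b) powr (1-\<alpha>))"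
    using a b c d unfolding k_def by (simp add: powr_divide field_simps)
  also have "\<dots> \<le> k * (\<alpha> * (c/a) + (1-\<alpha>) * (d/b))"
    using Youngs_inequality_0[of \<alpha> "1-\<alpha>" "c/a" "d/b"] al a b c d k by simp
  also have "\<dots> = \<alpha> * (k/a * c) + (1-\<alpha>) * (k/b * d)" by (simp add: algebra_simps)
  finally have "ennreal (c powr \<alpha> * d powr (1-\<alpha>)) \<le> ennreal (\<alpha> * (k/a * c) + (1-\<alpha>) * (k/b * d))"
    by (rule ennreal_leI)
  also have "\<dots> = ennreal \<alpha> * (ennreal (k/a) * ennreal c) + ennreal (1-\<alpha>) * (ennreal (k/b) * ennreal d)"
    using al a b c d k by (simp add: ennreal_plus flip: ennreal_mult)
  also have "\<dots> \<le> ennreal \<alpha> * (ennreal (k/a) * (\<integral>\<^sup>+x. f x \<partial>lborel)) + ennreal (1-\<alpha>) * (ennreal (k/b) * (\<integral>\<^sup>+x. g x \<partial>lborel))"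
    using c d by (intro add_mono mult_left_mono) auto
  also have "\<dots> \<le> (\<integral>\<^sup>+x. h x \<partial>lborel)"
    using prekopa_leindler_real_levels[OF assms(1-3) al H fS gS a b] by (simp add: k_def)
  finally show ?thesis .
qed
definition truncation :: "(real \<Rightarrow> ennreal) \<Rightarrow> nat \<Rightarrow> real \<Rightarrow> ennreal" where
  "truncation f N x = min (f x) (ennreal (real N)) * indicator {- real N .. real N} x"

lemma truncation_le: "truncation f N x \<le> f x"
  unfolding truncation_def by (auto simp: indicator_def)

lemma truncation_measurable[measurable]: "f \<in> borel_measurable borel \<Longrightarrow> truncation f N \<in> borel_measurable borel"
proof -
  assume [measurable]: "f \<in> borel_measurable borel"
  have [measurable]: "{-real N..real N} \<in> sets borel" by simp
  show ?thesis unfolding truncation_def[abs_def] by measurable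
qed

lemma incseq_truncation: "incseq (\<lambda>N. truncation f N)"
proof (rule incseq_SucI, rule le_funI)
  fix N x
  have le: "ennreal (real N) \<le> ennreal (real (Suc N))" by (intro ennreal_leI) simp
  show "truncation f N x \<le> truncation f (Suc N) x"
  proof (cases "x \<in> {-real N..real N}")
    case True
    then have "x \<in> {-real (Suc N)..real (Suc N)}" by auto
    have "min (f x) (ennreal (real N)) \<le> min (f x) (ennreal (real (Suc N)))"
      using le by (metis min.mono order_refl)
    then show ?thesis using True \<open>x \<in> {-real (Suc N)..real (Suc N)}\<close> unfolding truncation_def
      by (metis indicator_simps(1) mult_1_right)
  qed (simp add: truncation_def)
qed

lemma SUP_truncation: "(SUP N. truncation f N x) = f x"
proof (rule antisym)
  show "(SUP N. truncation f N x) \<le> f x" by (simp add: SUP_le_iff truncation_le)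
  show "f x \<le> (SUP N. truncation f N x)"
    unfolding le_SUP_iff
  proof (intro allI impI)
    fix y assume y: "y < f x"
    then obtain r where r: "y = ennreal r" "0 \<le> r" by (cases y rule: ennreal_cases) auto
    obtain N :: nat where N: "max \<bar>x\<bar> (r+1) < real N" using reals_Archimedean2 by blast
    have "y < ennreal (real N)" using N r by (auto simp: ennreal_less_iff)
    then have "y < truncation f N x" using y N unfolding truncation_def by (auto simp: indicator_def)
    then show "\<exists>i\<in>UNIV. y < truncation f i x" by blast
  qed
qed

lemma nn_integral_SUP_truncation: "f \<in> borel_measurable borel \<Longrightarrow> (\<integral>\<^sup>+x. f x \<partial>lborel) = (SUP N. \<integral>\<^sup>+x. truncation f N x \<partial>lborel)"
  using nn_integral_monotone_convergence_SUP[OF incseq_truncation, where M=lborel and f1=f] by (simp add: SUP_truncation)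

lemma prekopa_leindler_real:
  fixes f g h :: "real \<Rightarrow> ennreal"
  assumes [measurable]: "f \<in> borel_measurable borel" "g \<in> borel_measurable borel" "h \<in> borel_measurable borel"
    and al: "0 < \<alpha>" "\<alpha> < 1"
    and H: "\<And>x y c d. 0 < c \<Longrightarrow> 0 < d \<Longrightarrow> ennreal c < f x \<Longrightarrow> ennreal d < g y \<Longrightarrow>
              ennreal (c powr \<alpha> * d powr (1-\<alpha>)) \<le> h (\<alpha>*x + (1-\<alpha>)*y)"
    and c: "0 < c" "ennreal c < (\<integral>\<^sup>+x. f x \<partial>lborel)"
    and d: "0 < d" "ennreal d < (\<integral>\<^sup>+x. g x \<partial>lborel)"
  shows "ennreal (c powr \<alpha> * d powr (1-\<alpha>)) \<le> (\<integral>\<^sup>+x. h x \<partial>lborel)"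
proof -
  obtain N1 where N1: "ennreal c < (\<integral>\<^sup>+x. truncation f N1 x \<partial>lborel)"
    using c(2) unfolding nn_integral_SUP_truncation[OF assms(1)] less_SUP_iff by blast
  obtain N2 where N2: "ennreal d < (\<integral>\<^sup>+x. truncation g N2 x \<partial>lborel)"
    using d(2) unfolding nn_integral_SUP_truncation[OF assms(2)] less_SUP_iff by blast
  define N where "N = max N1 N2"
  have "(\<integral>\<^sup>+x. truncation f N1 x \<partial>lborel) \<le> (\<integral>\<^sup>+x. truncation f N x \<partial>lborel)"
    using incseq_truncation[of f] unfolding N_def incseq_def by (intro nn_integral_mono) (auto simp: le_fun_def)
  with N1 have c': "ennreal c < (\<integral>\<^sup>+x. truncation f N x \<partial>lborel)" by order
  have "(\<integral>\<^sup>+x. truncation g N2 x \<partial>lborel) \<le> (\<integral>\<^sup>+x. truncation g N x \<partial>lborel)"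
    using incseq_truncation[of g] unfolding N_def incseq_def by (intro nn_integral_mono) (auto simp: le_fun_def)
  with N2 have d': "ennreal d < (\<integral>\<^sup>+x. truncation g N x \<partial>lborel)" by order
  show ?thesis
  proof (rule prekopa_leindler_real_bounded[where K="real N"])
    show "truncation f N \<in> borel_measurable borel" "truncation g N \<in> borel_measurable borel" by measurable
    show "h \<in> borel_measurable borel" by measurable
    show "0 < \<alpha>" "\<alpha> < 1" by fact+
    show "ennreal (c' powr \<alpha> * d' powr (1-\<alpha>)) \<le> h (\<alpha>*x + (1-\<alpha>)*y)"
      if "0 < c'" "0 < d'" "ennreal c' < truncation f N x" "ennreal d' < truncation g N y" for x y c' d'
      using that truncation_le[of f N x] truncation_le[of g N y] by (intro H) auto
    show "truncation f N x \<le> ennreal (real N)" "truncation g N x \<le> ennreal (real N)" for x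
      unfolding truncation_def by (auto simp: indicator_def)
    show "truncation f N x = 0" if "real N < x" for x using that unfolding truncation_def by (auto simp: indicator_def)
    show "truncation g N x = 0" if "x < - real N" for x using that unfolding truncation_def by (auto simp: indicator_def)
  qed (use c d c' d' in auto)
qed


section \<open>Marginals of logconcave functions\<close>

text \<open>Logconcavity of an \<open>ennreal\<close>-valued function is stated through strict lower bounds
  \<open>c < G u1\<close>, \<open>d < G u0\<close> by positive reals: this avoids \<open>0 powr _\<close> and infinite values, and it is
  the form in which the Prekopa--Leindler inequality is proved and used. For finite values it
  agrees with \<open>logconcave_on\<close> (lemma \<open>logconcave_on_enn2real\<close>).\<close>

definition logconcave_ennreal_on :: "'u::real_vector set \<Rightarrow> ('u \<Rightarrow> ennreal) \<Rightarrow> bool" where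
  "logconcave_ennreal_on D G \<longleftrightarrow> (\<forall>u0\<in>D. \<forall>u1\<in>D. \<forall>\<alpha>::real. 0 < \<alpha> \<longrightarrow> \<alpha> < 1 \<longrightarrow> (\<forall>c d. 0 < c \<longrightarrow> 0 < d \<longrightarrow>
     ennreal c < G u1 \<longrightarrow> ennreal d < G u0 \<longrightarrow>
     ennreal (c powr \<alpha> * d powr (1-\<alpha>)) \<le> G (\<alpha> *\<^sub>R u1 + (1-\<alpha>) *\<^sub>R u0)))"

lemma logconcave_ennreal_onD:
  assumes "logconcave_ennreal_on D G" "u0 \<in> D" "u1 \<in> D" "0 < \<alpha>" "\<alpha> < 1" "0 < c" "0 < d" "ennreal c < G u1" "ennreal d < G u0"
  shows "ennreal (c powr \<alpha> * d powr (1-\<alpha>)) \<le> G (\<alpha> *\<^sub>R u1 + (1-\<alpha>) *\<^sub>R u0)"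
  using assms unfolding logconcave_ennreal_on_def by blast

lemma logconcave_ennreal_on_cong:
  assumes "logconcave_ennreal_on D G" "\<And>u. u \<in> D \<Longrightarrow> G u = G' u" "convex D"
  shows "logconcave_ennreal_on D G'"
  unfolding logconcave_ennreal_on_def
proof (intro ballI allI impI)
  fix u0 u1 \<alpha> c d assume *: "u0 \<in> D" "u1 \<in> D" "0 < (\<alpha>::real)" "\<alpha> < 1" "0 < c" "0 < d"
    "ennreal c < G' u1" "ennreal d < G' u0"
  have "\<alpha> *\<^sub>R u1 + (1-\<alpha>) *\<^sub>R u0 \<in> D" using assms(3) * unfolding convex_def by auto
  then show "ennreal (c powr \<alpha> * d powr (1-\<alpha>)) \<le> G' (\<alpha> *\<^sub>R u1 + (1-\<alpha>) *\<^sub>R u0)"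
    using * assms(2)[symmetric] logconcave_ennreal_onD[OF assms(1)] by metis
qed

lemma logconcave_ennreal_on_compose_affine:
  assumes "logconcave_ennreal_on D G" and LD: "\<And>u. u \<in> D' \<Longrightarrow> L u \<in> D"
    and Ll: "\<And>u0 u1 \<alpha>. u0 \<in> D' \<Longrightarrow> u1 \<in> D' \<Longrightarrow> L (\<alpha> *\<^sub>R u1 + (1-\<alpha>) *\<^sub>R u0) = \<alpha> *\<^sub>R L u1 + (1-\<alpha>) *\<^sub>R L u0"
  shows "logconcave_ennreal_on D' (\<lambda>u. G (L u))"
  unfolding logconcave_ennreal_on_def
proof (intro ballI allI impI)
  fix u0 u1 \<alpha> c d assume *: "u0 \<in> D'" "u1 \<in> D'" "0 < (\<alpha>::real)" "\<alpha> < 1" "0 < c" "0 < d"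
    "ennreal c < G (L u1)" "ennreal d < G (L u0)"
  show "ennreal (c powr \<alpha> * d powr (1-\<alpha>)) \<le> G (L (\<alpha> *\<^sub>R u1 + (1-\<alpha>) *\<^sub>R u0))"
    unfolding Ll[OF *(1,2)] using * LD by (intro logconcave_ennreal_onD[OF assms(1)]) auto
qed

lemma logconcave_ennreal_on_marginal_real:
  fixes G :: "real \<Rightarrow> 'w::real_vector \<Rightarrow> ennreal"
  assumes lc: "logconcave_ennreal_on (UNIV \<times> D) (\<lambda>(s,w). G s w)" and cD: "convex D"
    and meas: "\<And>w. w \<in> D \<Longrightarrow> (\<lambda>s. G s w) \<in> borel_measurable borel"
  shows "logconcave_ennreal_on D (\<lambda>w. \<integral>\<^sup>+s. G s w \<partial>lborel)"
  unfolding logconcave_ennreal_on_def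
proof (intro ballI allI impI)
  fix w0 w1 \<alpha> c d assume *: "w0 \<in> D" "w1 \<in> D" "0 < (\<alpha>::real)" "\<alpha> < 1" "0 < c" "0 < d"
    "ennreal c < (\<integral>\<^sup>+s. G s w1 \<partial>lborel)" "ennreal d < (\<integral>\<^sup>+s. G s w0 \<partial>lborel)"
  have wa: "\<alpha> *\<^sub>R w1 + (1-\<alpha>) *\<^sub>R w0 \<in> D" using cD * unfolding convex_def by auto
  show "ennreal (c powr \<alpha> * d powr (1-\<alpha>)) \<le> (\<integral>\<^sup>+s. G s (\<alpha> *\<^sub>R w1 + (1-\<alpha>) *\<^sub>R w0) \<partial>lborel)"
  proof (rule prekopa_leindler_real[where f="\<lambda>s. G s w1" and g="\<lambda>s. G s w0"])
    show "(\<lambda>s. G s w1) \<in> borel_measurable borel" "(\<lambda>s. G s w0) \<in> borel_measurable borel"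
      "(\<lambda>s. G s (\<alpha> *\<^sub>R w1 + (1-\<alpha>) *\<^sub>R w0)) \<in> borel_measurable borel"
      using meas * wa by auto
    fix x y c' d' assume **: "0 < c'" "0 < d'" "ennreal c' < G x w1" "ennreal d' < G y w0"
    have "ennreal (c' powr \<alpha> * d' powr (1-\<alpha>)) \<le> (\<lambda>(s,w). G s w) (\<alpha> *\<^sub>R (x,w1) + (1-\<alpha>) *\<^sub>R (y,w0))"
      using * ** by (intro logconcave_ennreal_onD[OF lc]) auto
    then show "ennreal (c' powr \<alpha> * d' powr (1-\<alpha>)) \<le> G (\<alpha>*x + (1-\<alpha>)*y) (\<alpha> *\<^sub>R w1 + (1-\<alpha>) *\<^sub>R w0)"
      by simp
  qed (use * in auto)
qed

definition replace_coords :: "'a::euclidean_space \<Rightarrow> 'a set \<Rightarrow> ('a \<Rightarrow> real) \<Rightarrow> 'a" where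
  "replace_coords y I z = y + (\<Sum>b\<in>I. (z b - y \<bullet> b) *\<^sub>R b)"

lemma measurable_replace_coords_pair:
  assumes "finite I"
  shows "(\<lambda>p. replace_coords (fst p) I (snd p)) \<in> (borel \<Otimes>\<^sub>M PiM I (\<lambda>_. lborel)) \<rightarrow>\<^sub>M borel"
  unfolding replace_coords_def
proof (intro borel_measurable_add borel_measurable_sum)
  show "fst \<in> borel_measurable (borel \<Otimes>\<^sub>M PiM I (\<lambda>_. lborel))" by measurable
  fix b assume b: "b \<in> I"
  have [measurable]: "(\<lambda>x. x b) \<in> PiM I (\<lambda>_. lborel) \<rightarrow>\<^sub>M borel"
    using measurable_component_singleton[OF b, of "\<lambda>_. lborel"] by simp
  show "(\<lambda>p. (snd p b - fst p \<bullet> b) *\<^sub>R b) \<in> borel_measurable (borel \<Otimes>\<^sub>M PiM I (\<lambda>_. lborel))"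
    by measurable
qed

lemma borel_measurable_nn_integral_replace_coords:
  fixes g :: "'a::euclidean_space \<Rightarrow> ennreal"
  assumes "finite I" and [measurable]: "g \<in> borel_measurable borel"
  shows "(\<lambda>y. \<integral>\<^sup>+z. g (replace_coords y I z) \<partial>PiM I (\<lambda>_. lborel)) \<in> borel_measurable borel"
proof -
  interpret product_sigma_finite "\<lambda>_. lborel" by standard
  interpret finite_product_sigma_finite "\<lambda>_. lborel" I by standard fact
  have [measurable]: "(\<lambda>p. replace_coords (fst p) I (snd p)) \<in> (borel \<Otimes>\<^sub>M PiM I (\<lambda>_. lborel)) \<rightarrow>\<^sub>M borel"
    by (rule measurable_replace_coords_pair) fact
  have "(\<lambda>(y,z). g (replace_coords y I z)) \<in> borel_measurable (borel \<Otimes>\<^sub>M PiM I (\<lambda>_. lborel))"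
    using measurable_comp[OF measurable_replace_coords_pair[OF assms(1)] assms(2)] by (simp add: case_prod_beta comp_def)
  then show ?thesis by (rule borel_measurable_nn_integral)
qed

lemma measurable_replace_coords:
  assumes "finite I"
  shows "(\<lambda>z. replace_coords y I z) \<in> PiM I (\<lambda>_. lborel) \<rightarrow>\<^sub>M borel"
  unfolding replace_coords_def
proof (intro borel_measurable_add borel_measurable_sum)
  fix b assume b: "b \<in> I"
  have [measurable]: "(\<lambda>x. x b) \<in> PiM I (\<lambda>_. lborel) \<rightarrow>\<^sub>M borel"
    using measurable_component_singleton[OF b, of "\<lambda>_. lborel"] by simp
  show "(\<lambda>z. (z b - y \<bullet> b) *\<^sub>R b) \<in> borel_measurable (PiM I (\<lambda>_. lborel))"
    by measurable
qed simp

lemma replace_coords_empty: "replace_coords y {} z = y" by (simp add: replace_coords_def)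

lemma replace_coords_insert:
  assumes "finite I" "i \<in> Basis" "I \<subseteq> Basis" "i \<notin> I"
  shows "replace_coords y (insert i I) (z(i:=s)) = replace_coords (y + (s - y \<bullet> i) *\<^sub>R i) I z"
proof -
  have "replace_coords y (insert i I) (z(i:=s)) = y + (s - y \<bullet> i) *\<^sub>R i + (\<Sum>b\<in>I. (z b - y \<bullet> b) *\<^sub>R b)"
    unfolding replace_coords_def using assms
    by (simp add: sum.insert add.assoc) (intro sum.cong, auto)
  also have "(\<Sum>b\<in>I. (z b - y \<bullet> b) *\<^sub>R b) = (\<Sum>b\<in>I. (z b - (y + (s - y \<bullet> i) *\<^sub>R i) \<bullet> b) *\<^sub>R b)"
  proof (intro sum.cong refl)
    fix b assume b: "b \<in> I"
    then have "i \<bullet> b = 0" using assms by (metis inner_not_same_Basis subsetD)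
    then show "(z b - y \<bullet> b) *\<^sub>R b = (z b - (y + (s - y \<bullet> i) *\<^sub>R i) \<bullet> b) *\<^sub>R b"
      by (simp add: inner_add_left)
  qed
  finally show ?thesis unfolding replace_coords_def by simp
qed

lemma nn_integral_replace_coords_insert:
  fixes g :: "'a::euclidean_space \<Rightarrow> ennreal"
  assumes I: "finite I" "i \<in> Basis" "I \<subseteq> Basis" "i \<notin> I" and [measurable]: "g \<in> borel_measurable borel"
  shows "(\<integral>\<^sup>+z. g (replace_coords y (insert i I) z) \<partial>PiM (insert i I) (\<lambda>_. lborel))
       = (\<integral>\<^sup>+s. \<integral>\<^sup>+z. g (replace_coords (y + (s - y \<bullet> i) *\<^sub>R i) I z) \<partial>PiM I (\<lambda>_. lborel) \<partial>lborel)"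
proof -
  interpret product_sigma_finite "\<lambda>_. lborel" by standard
  have [measurable]: "(\<lambda>z. replace_coords y (insert i I) z) \<in> PiM (insert i I) (\<lambda>_. lborel) \<rightarrow>\<^sub>M borel"
    using measurable_replace_coords[of "insert i I" y] I by simp
  have "(\<integral>\<^sup>+z. g (replace_coords y (insert i I) z) \<partial>PiM (insert i I) (\<lambda>_. lborel))
      = (\<integral>\<^sup>+s. \<integral>\<^sup>+z. g (replace_coords y (insert i I) (z(i:=s))) \<partial>PiM I (\<lambda>_. lborel) \<partial>lborel)"
    by (rule product_nn_integral_insert_rev) (use I in auto)
  then show ?thesis using I by (simp add: replace_coords_insert)
qed

text \<open>Integrating out one more coordinate is the one-dimensional Prekopa--Leindler inequality,
  applied to the partial marginal obtained so far.\<close>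

lemma logconcave_ennreal_on_partial_marginal:
  fixes G :: "'a::euclidean_space \<Rightarrow> 'v::real_vector \<Rightarrow> ennreal"
  assumes "finite I" "I \<subseteq> Basis" and lc: "logconcave_ennreal_on (UNIV \<times> D) (\<lambda>(y,v). G y v)" and cD: "convex D"
    and meas: "\<And>v. v \<in> D \<Longrightarrow> (\<lambda>y. G y v) \<in> borel_measurable borel"
  shows "logconcave_ennreal_on (UNIV \<times> D) (\<lambda>(y,v). \<integral>\<^sup>+z. G (replace_coords y I z) v \<partial>PiM I (\<lambda>_. lborel))"
  using assms(1,2)
proof (induction I)
  case empty
  interpret product_sigma_finite "\<lambda>_. lborel" by standard
  show ?case using lc
    by (rule logconcave_ennreal_on_cong) (auto simp: replace_coords_empty space_PiM_empty intro: convex_Times cD)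
next
  case (insert i I)
  define H where "H y v = (\<integral>\<^sup>+z. G (replace_coords y I z) v \<partial>PiM I (\<lambda>_. lborel))" for y v
  define G' where "G' s w = H (fst w + (s - fst w \<bullet> i) *\<^sub>R i) (snd w)" for s :: real and w :: "'a \<times> 'v"
  have "logconcave_ennreal_on (UNIV \<times> D) (\<lambda>(y,v). H y v)" using insert by (simp add: H_def)
  then have "logconcave_ennreal_on (UNIV \<times> (UNIV \<times> D))
      (\<lambda>u. (\<lambda>(y,v). H y v) ((\<lambda>(s,w). (fst w + (s - fst w \<bullet> i) *\<^sub>R i, snd w)) u))"
    by (rule logconcave_ennreal_on_compose_affine) (auto simp: algebra_simps inner_add_left)
  moreover have "(\<lambda>(s,w). G' s w) = (\<lambda>u. H (fst (snd u) + (fst u - fst (snd u) \<bullet> i) *\<^sub>R i) (snd (snd u)))"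
    by (auto simp: G'_def fun_eq_iff)
  ultimately have "logconcave_ennreal_on (UNIV \<times> (UNIV \<times> D)) (\<lambda>(s,w). G' s w)"
    by (simp add: case_prod_beta)
  moreover have "(\<lambda>s. G' s w) \<in> borel_measurable borel" if "w \<in> UNIV \<times> D" for w
  proof -
    have [measurable]: "(\<lambda>y. H y (snd w)) \<in> borel_measurable borel"
      unfolding H_def using that insert(1) meas by (intro borel_measurable_nn_integral_replace_coords) auto
    show ?thesis unfolding G'_def by measurable
  qed
  ultimately have "logconcave_ennreal_on (UNIV \<times> D) (\<lambda>w. \<integral>\<^sup>+s. G' s w \<partial>lborel)"
    by (intro logconcave_ennreal_on_marginal_real) (auto intro: convex_Times cD)
  then show ?case
  proof (rule logconcave_ennreal_on_cong)
    fix u :: "'a \<times> 'v" assume "u \<in> UNIV \<times> D"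
    then show "(\<integral>\<^sup>+s. G' s u \<partial>lborel) = (\<lambda>(y,v). \<integral>\<^sup>+z. G (replace_coords y (insert i I) z) v \<partial>PiM (insert i I) (\<lambda>_. lborel)) u"
      using insert meas nn_integral_replace_coords_insert[of I i "\<lambda>y. G y (snd u)" "fst u"]
      by (auto simp: G'_def H_def case_prod_beta)
  qed (auto intro: convex_Times cD)
qed

lemma logconcave_ennreal_on_marginal:
  fixes G :: "'a::euclidean_space \<Rightarrow> 'v::real_vector \<Rightarrow> ennreal"
  assumes lc: "logconcave_ennreal_on (UNIV \<times> D) (\<lambda>(y,v). G y v)" and cD: "convex D"
    and meas: "\<And>v. v \<in> D \<Longrightarrow> (\<lambda>y. G y v) \<in> borel_measurable borel"
  shows "logconcave_ennreal_on D (\<lambda>v. \<integral>\<^sup>+x. G x v \<partial>lborel)"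
proof -
  have L: "logconcave_ennreal_on (UNIV \<times> D) (\<lambda>(y,v). \<integral>\<^sup>+z. G (replace_coords y Basis z) v \<partial>PiM Basis (\<lambda>_. lborel))"
    by (rule logconcave_ennreal_on_partial_marginal[OF _ _ lc cD meas]) auto
  have eq: "(\<integral>\<^sup>+z. G (replace_coords y Basis z) v \<partial>PiM Basis (\<lambda>_. lborel)) = (\<integral>\<^sup>+x. G x v \<partial>lborel)"
    if v: "v \<in> D" for y v
  proof -
    have [measurable]: "(\<lambda>y. G y v) \<in> borel_measurable borel" using meas v .
    have u: "replace_coords y Basis z = (\<Sum>b\<in>Basis. z b *\<^sub>R b)" for z
    proof -
      have "replace_coords y Basis z = y - (\<Sum>b\<in>Basis. (y \<bullet> b) *\<^sub>R b) + (\<Sum>b\<in>Basis. z b *\<^sub>R b)"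
        unfolding replace_coords_def by (simp add: scaleR_diff_left sum_subtractf algebra_simps)
      then show ?thesis by (simp add: euclidean_representation)
    qed
    have "(\<integral>\<^sup>+x. G x v \<partial>lborel) = (\<integral>\<^sup>+x. G x v \<partial>distr (\<Pi>\<^sub>M b\<in>Basis. lborel) borel (\<lambda>f. \<Sum>b\<in>Basis. f b *\<^sub>R b))"
      by (subst lborel_eq) simp
    also have "\<dots> = (\<integral>\<^sup>+z. G (\<Sum>b\<in>Basis. z b *\<^sub>R b) v \<partial>PiM Basis (\<lambda>_. lborel))"
      by (subst nn_integral_distr) auto
    finally show ?thesis by (simp add: u)
  qed
  have "logconcave_ennreal_on (UNIV \<times> D) (\<lambda>(y::'a,v). \<integral>\<^sup>+x. G x v \<partial>lborel)"
    by (rule logconcave_ennreal_on_cong[OF L]) (auto simp: eq intro: convex_Times cD)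
  then have "logconcave_ennreal_on D (\<lambda>v. (\<lambda>(y,v). \<integral>\<^sup>+x. G x v \<partial>lborel) ((0::'a, v)))"
    by (rule logconcave_ennreal_on_compose_affine) auto
  then show ?thesis by simp
qed

lemma logconcave_ennreal_on_finite_valuesD:
  assumes lc: "logconcave_ennreal_on D E" and u: "u0 \<in> D" "u1 \<in> D" and al: "0 < \<alpha>" "\<alpha> < 1"
    and E: "E u1 = ennreal a" "E u0 = ennreal b" "0 < a" "0 < b"
    and fin: "E (\<alpha> *\<^sub>R u1 + (1-\<alpha>) *\<^sub>R u0) < \<infinity>"
  shows "a powr \<alpha> * b powr (1-\<alpha>) \<le> enn2real (E (\<alpha> *\<^sub>R u1 + (1-\<alpha>) *\<^sub>R u0))"
proof (rule field_le_mult_one_interval)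
  fix s :: real assume s: "0 < s" "s < 1"
  have "(s*a) powr \<alpha> * (s*b) powr (1-\<alpha>) = (s powr \<alpha> * s powr (1-\<alpha>)) * (a powr \<alpha> * b powr (1-\<alpha>))"
    using s E by (simp add: powr_mult)
  also have "s powr \<alpha> * s powr (1-\<alpha>) = s" using s by (simp flip: powr_add)
  finally have "ennreal (s * (a powr \<alpha> * b powr (1-\<alpha>))) = ennreal ((s*a) powr \<alpha> * (s*b) powr (1-\<alpha>))" by simp
  also have "\<dots> \<le> E (\<alpha> *\<^sub>R u1 + (1-\<alpha>) *\<^sub>R u0)"
    using s E al u by (intro logconcave_ennreal_onD[OF lc]) (auto simp: ennreal_less_iff)
  finally show "s * (a powr \<alpha> * b powr (1-\<alpha>)) \<le> enn2real (E (\<alpha> *\<^sub>R u1 + (1-\<alpha>) *\<^sub>R u0))"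
    using enn2real_mono fin s by fastforce
qed

lemma logconcave_on_enn2real:
  assumes lc: "logconcave_ennreal_on D E" and fin: "\<And>u. u \<in> D \<Longrightarrow> E u < \<infinity>" and cD: "convex D"
  shows "logconcave_on D (\<lambda>u. enn2real (E u))"
  unfolding logconcave_on_def
proof (intro ballI)
  fix u0 u1 \<alpha> assume u: "u0 \<in> D" "u1 \<in> D" and al: "\<alpha> \<in> {0..1::real}"
  define a where "a = enn2real (E u1)"
  define b where "b = enn2real (E u0)"
  have ab: "a \<ge> 0" "b \<ge> 0" by (auto simp: a_def b_def)
  consider "\<alpha> = 0" | "\<alpha> = 1" | "a = 0 \<or> b = 0" | "0 < \<alpha>" "\<alpha> < 1" "0 < a" "0 < b"
    using al ab by fastforce
  then have "a powr \<alpha> * b powr (1 - \<alpha>) \<le> enn2real (E (\<alpha> *\<^sub>R u1 + (1 - \<alpha>) *\<^sub>R u0))"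
  proof cases
    case 4
    moreover have "E u1 = ennreal a" "E u0 = ennreal b" using fin u by (auto simp: a_def b_def less_top)
    moreover have "\<alpha> *\<^sub>R u1 + (1-\<alpha>) *\<^sub>R u0 \<in> D" using convexD[OF cD u(2,1)] 4 by auto
    ultimately show ?thesis using u fin by (intro logconcave_ennreal_on_finite_valuesD[OF lc]) auto
  qed (use ab in \<open>auto simp: a_def b_def\<close>)
  then show "enn2real (E u1) powr \<alpha> * enn2real (E u0) powr (1 - \<alpha>) \<le> enn2real (E (\<alpha> *\<^sub>R u1 + (1 - \<alpha>) *\<^sub>R u0))"
    by (simp add: a_def b_def)
qed

section \<open>Measures of sections of convex sets\<close>

lemma interior_section_convex_combination:
  fixes K :: "('a::real_normed_vector \<times> 'v::real_vector) set"
  assumes K: "convex K" and w1: "w1 \<in> interior {w. (w, v1) \<in> K}" and w0: "(w0, v0) \<in> K"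
    and al: "0 < \<alpha>" "\<alpha> \<le> 1"
  shows "\<alpha> *\<^sub>R w1 + (1-\<alpha>) *\<^sub>R w0 \<in> interior {w. (w, \<alpha> *\<^sub>R v1 + (1-\<alpha>) *\<^sub>R v0) \<in> K}"
proof -
  define wa where "wa = \<alpha> *\<^sub>R w1 + (1-\<alpha>) *\<^sub>R w0"
  obtain e where e: "0 < e" "ball w1 e \<subseteq> {w. (w, v1) \<in> K}" using w1 by (meson mem_interior)
  have "ball wa (\<alpha>*e) \<subseteq> {w. (w, \<alpha> *\<^sub>R v1 + (1-\<alpha>) *\<^sub>R v0) \<in> K}"
  proof
    fix z assume z: "z \<in> ball wa (\<alpha>*e)"
    define z1 where "z1 = w1 + (1/\<alpha>) *\<^sub>R (z - wa)"
    have "dist w1 z1 = (1/\<alpha>) * norm (z - wa)" using al by (simp add: z1_def dist_norm)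
    also have "\<dots> < e" using z al by (simp add: dist_norm norm_minus_commute field_simps)
    finally have "(z1, v1) \<in> K" using e by auto
    then have "\<alpha> *\<^sub>R (z1, v1) + (1-\<alpha>) *\<^sub>R (w0, v0) \<in> K"
      using al w0 by (intro convexD[OF K]) auto
    moreover have "\<alpha> *\<^sub>R z1 + (1-\<alpha>) *\<^sub>R w0 = z" using al by (simp add: z1_def wa_def algebra_simps)
    ultimately show "z \<in> {w. (w, \<alpha> *\<^sub>R v1 + (1-\<alpha>) *\<^sub>R v0) \<in> K}" by simp
  qed
  then show ?thesis using al e unfolding wa_def by (meson mem_interior mult_pos_pos)
qed

lemma logconcave_ennreal_on_density_interior_section:
  fixes p :: "'a::euclidean_space \<Rightarrow> real" and K :: "('a \<times> 'v::real_vector) set"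
  assumes plc: "logconcave_on UNIV p" and pnn: "\<And>w. p w \<ge> 0" and K: "convex K"
  shows "logconcave_ennreal_on (UNIV \<times> D) (\<lambda>(w,v). ennreal (p w) * indicator (interior {w. (w, v) \<in> K}) w)"
  unfolding logconcave_ennreal_on_def
proof (intro ballI allI impI)
  let ?N = "\<lambda>v. interior {w. (w, v) \<in> K}"
  fix u0 u1 :: "'a \<times> 'v" and \<alpha> c d :: real
  assume al: "0 < \<alpha>" "\<alpha> < 1" and cd: "0 < c" "0 < d"
    and c: "ennreal c < (\<lambda>(w,v). ennreal (p w) * indicator (?N v) w) u1"
    and d: "ennreal d < (\<lambda>(w,v). ennreal (p w) * indicator (?N v) w) u0"
  obtain w0 v0 where u0: "u0 = (w0,v0)" by force
  obtain w1 v1 where u1: "u1 = (w1,v1)" by force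
  have i1: "w1 \<in> ?N v1" using c u1 cd by (cases "w1 \<in> ?N v1") auto
  then have pc: "c < p w1" using c u1 cd pnn by (simp add: ennreal_less_iff)
  have i0: "w0 \<in> ?N v0" using d u0 cd by (cases "w0 \<in> ?N v0") auto
  then have pd: "d < p w0" using d u0 cd pnn by (simp add: ennreal_less_iff)
  have "\<alpha> *\<^sub>R w1 + (1-\<alpha>) *\<^sub>R w0 \<in> ?N (\<alpha> *\<^sub>R v1 + (1-\<alpha>) *\<^sub>R v0)"
    using i0 interior_subset al by (intro interior_section_convex_combination[OF K i1]) auto
  moreover have "c powr \<alpha> * d powr (1-\<alpha>) \<le> p w1 powr \<alpha> * p w0 powr (1-\<alpha>)"
    using pc pd cd al by (intro mult_mono powr_mono2) auto
  moreover have "\<dots> \<le> p (\<alpha> *\<^sub>R w1 + (1-\<alpha>) *\<^sub>R w0)" using plc al unfolding logconcave_on_def by auto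
  ultimately show "ennreal (c powr \<alpha> * d powr (1-\<alpha>))
      \<le> (\<lambda>(w,v). ennreal (p w) * indicator (?N v) w) (\<alpha> *\<^sub>R u1 + (1-\<alpha>) *\<^sub>R u0)"
    using u0 u1 by (simp add: ennreal_leI)
qed

text \<open>A convex set need not be Borel, but it differs from its open interior only by part of its
  frontier, which is Lebesgue-null.\<close>

lemma emeasure_density_convex_eq_interior:
  fixes p :: "'a::euclidean_space \<Rightarrow> real"
  assumes pm: "p \<in> borel_measurable borel" and cA: "convex A"
  shows "emeasure (density lebesgue (\<lambda>w. ennreal (p w))) A = (\<integral>\<^sup>+w. ennreal (p w) * indicator (interior A) w \<partial>lborel)"
proof -
  have neg: "negligible (A - interior A)"
  proof (rule negligible_subset[OF negligible_convex_frontier[OF cA]])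
    show "A - interior A \<subseteq> frontier A" using closure_subset by (auto simp: frontier_def)
  qed
  then have null: "A - interior A \<in> null_sets lebesgue" by (simp add: negligible_iff_null_sets)
  have io: "interior A \<in> sets lebesgue" by (simp add: borel_open sets_completionI_sets)
  have Aeq: "A = interior A \<union> (A - interior A)" using interior_subset by blast
  have "interior A \<union> (A - interior A) \<in> sets lebesgue" by (rule sets.Un[OF io null_setsD2[OF null]])
  then have As: "A \<in> sets lebesgue" by (simp only: Aeq[symmetric])
  have fm: "(\<lambda>w. ennreal (p w)) \<in> borel_measurable lebesgue"
    using pm by (intro measurable_completion) simp
  have "emeasure (density lebesgue (\<lambda>w. ennreal (p w))) A = (\<integral>\<^sup>+w. ennreal (p w) * indicator A w \<partial>lebesgue)"
    by (rule emeasure_density[OF fm As])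
  also have "\<dots> = (\<integral>\<^sup>+w. ennreal (p w) * indicator (interior A) w \<partial>lebesgue)"
  proof (rule nn_integral_cong_AE)
    show "AE w in lebesgue. ennreal (p w) * indicator A w = ennreal (p w) * indicator (interior A) w"
      using AE_not_in[OF null] by eventually_elim (use interior_subset in \<open>auto simp: indicator_def\<close>)
  qed
  also have "\<dots> = (\<integral>\<^sup>+w. ennreal (p w) * indicator (interior A) w \<partial>lborel)"
    by (rule nn_integral_completion)
  finally show ?thesis .
qed

lemma convex_section:
  assumes "convex K"
  shows "convex {w. (w, v) \<in> K}"
proof (rule convexI)
  fix x y and s t :: real
  assume "x \<in> {w. (w, v) \<in> K}" "y \<in> {w. (w, v) \<in> K}" "0 \<le> s" "0 \<le> t" "s + t = 1"
  moreover from this have "s *\<^sub>R (x, v) + t *\<^sub>R (y, v) \<in> K" by (intro convexD[OF assms]) auto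
  moreover have "s *\<^sub>R v + t *\<^sub>R v = v" using \<open>s + t = 1\<close> by (simp flip: scaleR_add_left)
  ultimately show "s *\<^sub>R x + t *\<^sub>R y \<in> {w. (w, v) \<in> K}" by simp
qed

lemma logconcave_on_measure_sections:
  fixes p :: "'a::euclidean_space \<Rightarrow> real" and K :: "('a \<times> 'v::real_vector) set"
  assumes p_meas: "p \<in> borel_measurable borel" and p_nonneg: "\<And>w. 0 \<le> p w"
    and p_int: "integrable lborel p" and p_lc: "logconcave_on UNIV p" and cD: "convex D" and K: "convex K"
  shows "logconcave_on D (\<lambda>v. measure (density lebesgue (\<lambda>w. ennreal (p w))) {w. (w, v) \<in> K})"
proof -
  define E where "E v = (\<integral>\<^sup>+w. ennreal (p w) * indicator (interior {w. (w, v) \<in> K}) w \<partial>lborel)" for v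
  have lcD: "logconcave_ennreal_on D E" unfolding E_def
  proof (rule logconcave_ennreal_on_marginal[OF logconcave_ennreal_on_density_interior_section[OF p_lc p_nonneg K] cD])
    fix v
    have [measurable]: "interior {w. (w, v) \<in> K} \<in> sets borel" "p \<in> borel_measurable borel"
      using p_meas by simp_all
    show "(\<lambda>y. ennreal (p y) * indicator (interior {w. (w, v) \<in> K}) y) \<in> borel_measurable borel"
      by measurable
  qed
  have "E v \<le> (\<integral>\<^sup>+w. ennreal (p w) \<partial>lborel)" for v
    unfolding E_def by (intro nn_integral_mono) (auto simp: indicator_def)
  also have "(\<integral>\<^sup>+w. ennreal (p w) \<partial>lborel) < \<infinity>"
    using p_int p_nonneg by (simp add: nn_integral_eq_integral)
  finally have fin: "E v < \<infinity>" for v .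
  have "E v = emeasure (density lebesgue (\<lambda>w. ennreal (p w))) {w. (w, v) \<in> K}" for v
    unfolding E_def using emeasure_density_convex_eq_interior[OF _ convex_section[OF K]] p_meas by simp
  then show ?thesis
    using logconcave_on_enn2real[OF lcD fin cD] by (simp add: measure_def)
qed

section \<open>Logconcavity of the quantized-data likelihood\<close>

lemma convex_perspective:
  fixes C :: "'a::real_vector set"
  assumes "convex C"
  shows "convex {(u, t::real). 0 < t \<and> (1 / t) *\<^sub>R u \<in> C}"
proof (rule convexI, clarsimp)
  fix u0 u1 :: 'a and t0 t1 \<alpha> \<beta> :: real
  assume t: "0 < t0" "0 < t1" and C: "(1 / t0) *\<^sub>R u0 \<in> C" "(1 / t1) *\<^sub>R u1 \<in> C"
    and \<alpha>\<beta>: "0 \<le> \<alpha>" "0 \<le> \<beta>" "\<alpha> + \<beta> = 1"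
  define t where "t = \<alpha> * t0 + \<beta> * t1"
  have "0 < t"
    using t \<alpha>\<beta> unfolding t_def by (cases "\<alpha> = 0") (auto intro: add_pos_nonneg add_nonneg_pos)
  have "(\<alpha> * t0 / t) *\<^sub>R ((1 / t0) *\<^sub>R u0) + (\<beta> * t1 / t) *\<^sub>R ((1 / t1) *\<^sub>R u1) \<in> C"
    using \<open>0 < t\<close> t \<alpha>\<beta> C
    by (intro convexD[OF assms]) (auto simp: t_def add_divide_distrib[symmetric])
  moreover have "(\<alpha> * t0 / t) *\<^sub>R ((1 / t0) *\<^sub>R u0) + (\<beta> * t1 / t) *\<^sub>R ((1 / t1) *\<^sub>R u1)
      = (1 / t) *\<^sub>R (\<alpha> *\<^sub>R u0 + \<beta> *\<^sub>R u1)"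
    using t by (simp add: scaleR_add_right)
  ultimately show "0 < \<alpha> * t0 + \<beta> * t1 \<and> (1 / (\<alpha> * t0 + \<beta> * t1)) *\<^sub>R (\<alpha> *\<^sub>R u0 + \<beta> *\<^sub>R u1) \<in> C"
    using \<open>0 < t\<close> by (simp add: t_def)
qed

lemma matrix_inv_unique:
  fixes A B :: "'a::semiring_1^'n^'n"
  assumes "A ** B = mat 1" "B ** A = mat 1"
  shows "matrix_inv A = B"
proof -
  have "\<exists>A'. A ** A' = mat 1 \<and> A' ** A = mat 1" using assms by blast
  then have A': "A ** matrix_inv A = mat 1" "matrix_inv A ** A = mat 1"
    unfolding matrix_inv_def by (metis (mono_tags, lifting) someI_ex)+
  have "matrix_inv A = matrix_inv A ** (A ** B)" using assms by (simp add: matrix_mul_rid)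
  also have "\<dots> = B" using A' by (simp add: matrix_mul_assoc matrix_mul_lid)
  finally show ?thesis .
qed

lemma matrix_inv_diag:
  fixes d :: "'n::finite \<Rightarrow> real"
  assumes "\<And>i. d i \<noteq> 0"
  shows "matrix_inv (\<chi> i j. if i = j then d i else 0 :: real^'n^'n) = (\<chi> i j. if i = j then 1 / d i else 0)"
  by (rule matrix_inv_unique) (auto simp: matrix_matrix_mult_def mat_def vec_eq_iff assms if_distrib[where f="\<lambda>x. x * _"] cong: if_cong)


lemma matrix_inv_diagonal_mult:
  fixes L :: "real^'n^'n"
  assumes "\<And>i j. i \<noteq> j \<Longrightarrow> L $ i $ j = 0" "\<And>i. L $ i $ i \<noteq> 0"
  shows "matrix_inv L *v u = (\<chi> j. u $ j / L $ j $ j)"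
proof -
  have "L = (\<chi> i j. if i = j then L $ i $ i else 0)" using assms(1) by (simp add: vec_eq_iff)
  then have "matrix_inv L = (\<chi> i j. if i = j then 1 / L $ i $ i else 0)"
    using matrix_inv_diag[of "\<lambda>i. L $ i $ i", OF assms(2)] by metis
  then show ?thesis
    by (simp add: matrix_vector_mult_def vec_eq_iff if_distrib[where f="\<lambda>x. x * _"] cong: if_cong)
qed

lemma matrix_inv_mat_mult:
  fixes u :: "real^'n"
  assumes "\<psi> \<noteq> 0"
  shows "matrix_inv (mat \<psi> :: real^'n^'n) *v u = (1 / \<psi>) *\<^sub>R u"
  using matrix_inv_diagonal_mult[of "mat \<psi>" u] assms by (simp add: mat_def vec_eq_iff)

lemma convex_pos_diag_mats: "convex (pos_diag_mats :: (real^'n^'n) set)"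
  unfolding convex_alt
proof (intro ballI allI impI)
  fix x y :: "real^'n^'n" and u :: real
  assume x: "x \<in> pos_diag_mats" and y: "y \<in> pos_diag_mats" and u: "0 \<le> u \<and> u \<le> 1"
  have "(1-u) * x $ i $ i + u * y $ i $ i > 0" for i
  proof (cases "u = 0")
    case True then show ?thesis using x by (simp add: pos_diag_mats_def)
  next
    case False
    then have "0 < u * y $ i $ i" using u y by (simp add: pos_diag_mats_def)
    moreover have "0 \<le> (1-u) * x $ i $ i" using u x by (simp add: pos_diag_mats_def less_imp_le)
    ultimately show ?thesis by simp
  qed
  moreover have "(1-u) * x $ i $ j + u * y $ i $ j = 0" if "i \<noteq> j" for i j
    using that x y by (simp add: pos_diag_mats_def)
  ultimately show "(1 - u) *\<^sub>R x + u *\<^sub>R y \<in> pos_diag_mats"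
    by (simp add: pos_diag_mats_def)
qed

lemma convex_ereal_interval: "convex {t::real. a \<le> ereal t \<and> ereal t \<le> b}"
  unfolding is_interval_convex_1[symmetric] is_interval_1
  by (auto; metis ereal_less_eq(3) order.trans)

lemma logconcave_on_cong:
  assumes "logconcave_on D f" "\<And>u. u \<in> D \<Longrightarrow> f u = g u" "convex D"
  shows "logconcave_on D g"
  unfolding logconcave_on_def
proof (intro ballI)
  fix u0 u1 \<alpha> assume u: "u0 \<in> D" "u1 \<in> D" "\<alpha> \<in> {0..1::real}"
  then have "\<alpha> *\<^sub>R u1 + (1 - \<alpha>) *\<^sub>R u0 \<in> D"
    using convexD[OF assms(3) u(2,1), of \<alpha> "1 - \<alpha>"] by simp
  moreover have "f u1 powr \<alpha> * f u0 powr (1 - \<alpha>) \<le> f (\<alpha> *\<^sub>R u1 + (1 - \<alpha>) *\<^sub>R u0)"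
    using assms(1) u unfolding logconcave_on_def by blast
  ultimately show "g u1 powr \<alpha> * g u0 powr (1 - \<alpha>) \<le> g (\<alpha> *\<^sub>R u1 + (1 - \<alpha>) *\<^sub>R u0)"
    using assms(2) u by simp
qed

context
  fixes p :: "real^'n \<Rightarrow> real" and Q :: "real^'n \<Rightarrow> 'z" and S :: "real^'m^'n" and z :: 'z
  assumes p_meas: "p \<in> borel_measurable lborel" and p_nonneg: "\<And>w. 0 \<le> p w"
    and p_int: "integrable lborel p" and p_logconcave: "logconcave_on UNIV p"
begin

lemma logconcave_likelihood_sections:
  assumes "convex D" "convex K"
    and "\<And>v w. v \<in> D \<Longrightarrow> (w, v) \<in> K \<longleftrightarrow> w \<in> N v"
  shows "logconcave_on D (\<lambda>v. measure (law p) (N v))"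
proof (rule logconcave_on_cong[OF logconcave_on_measure_sections[OF _ p_nonneg p_int p_logconcave assms(1,2)]])
  show "p \<in> borel_measurable borel" using p_meas by simp
  show "measure (density lebesgue (\<lambda>w. ennreal (p w))) {w. (w, v) \<in> K} = measure (law p) (N v)"
    if "v \<in> D" for v
    using assms(3)[OF that] by (simp add: law_def)
qed fact

lemma logconcave_likelihood_fixed_matrix:
  assumes "convex (Q -` {z})"
  shows "logconcave_on UNIV (\<lambda>x. likelihood p Q S z x \<Psi>)"
  unfolding likelihood_def
proof (rule logconcave_likelihood_sections)
  have "linear (\<lambda>(w, x). matrix_inv \<Psi> *v (S *v x + w))"
    by (rule linearI) (auto simp: matrix_vector_right_distrib matrix_vector_mult_scaleR scaleR_add_right)
  then show "convex ((\<lambda>(w, x). matrix_inv \<Psi> *v (S *v x + w)) -` (Q -` {z}))"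
    by (intro convex_linear_vimage assms)
qed (auto simp: noise_region_def)

lemma logconcave_likelihood_scalar_matrix:
  assumes "convex (Q -` {z})"
  shows "logconcave_on (UNIV \<times> {0<..}) (\<lambda>(x, \<psi>). likelihood p Q S z x (mat \<psi>))"
  unfolding likelihood_def case_prod_beta
proof (rule logconcave_likelihood_sections)
  show "convex (UNIV \<times> {0::real<..})" by (intro convex_Times) auto
  have "linear (\<lambda>(w, x, \<psi>). (S *v x + w, \<psi>::real))"
    by (rule linearI) (auto simp: matrix_vector_right_distrib matrix_vector_mult_scaleR scaleR_add_right)
  then show "convex ((\<lambda>(w, x, \<psi>). (S *v x + w, \<psi>)) -` {(u, t). 0 < t \<and> (1 / t) *\<^sub>R u \<in> Q -` {z}})"
    by (intro convex_linear_vimage convex_perspective assms)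
qed (auto simp: noise_region_def matrix_inv_mat_mult)

lemma logconcave_likelihood_diagonal_matrix:
  fixes a b :: "'n \<Rightarrow> ereal"
  assumes box: "Q -` {z} = {y. \<forall>j. a j \<le> ereal (y $ j) \<and> ereal (y $ j) \<le> b j}"
  shows "logconcave_on (UNIV \<times> pos_diag_mats) (\<lambda>(x, \<Lambda>). likelihood p Q S z x \<Lambda>)"
  unfolding likelihood_def case_prod_beta
proof (rule logconcave_likelihood_sections)
  define I where "I j = {t::real. a j \<le> ereal t \<and> ereal t \<le> b j}" for j
  define K where "K = (UNIV \<times> UNIV \<times> pos_diag_mats) \<inter>
    (\<Inter>j. (\<lambda>(w, x, \<Lambda>). ((S *v x + w) $ j, \<Lambda> $ j $ j)) -` {(u, t). 0 < t \<and> (1 / t) *\<^sub>R u \<in> I j})"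
  show "convex (UNIV \<times> pos_diag_mats :: ((real^'m) \<times> (real^'n^'n)) set)"
    by (intro convex_Times convex_pos_diag_mats) auto
  have "linear (\<lambda>(w, x, \<Lambda>). ((S *v x + w) $ j, \<Lambda> $ j $ j))" for j
    by (rule linearI) (auto simp: matrix_vector_right_distrib matrix_vector_mult_scaleR algebra_simps)
  then show "convex K"
    unfolding K_def I_def
    by (intro convex_Int convex_Times convex_pos_diag_mats convex_INT convex_linear_vimage
        convex_perspective convex_ereal_interval convex_UNIV)
  fix v :: "(real^'m) \<times> (real^'n^'n)" and w
  assume v: "v \<in> UNIV \<times> pos_diag_mats"
  then have "matrix_inv (snd v) *v (S *v fst v + w) = (\<chi> j. (S *v fst v + w) $ j / snd v $ j $ j)"
    by (intro matrix_inv_diagonal_mult) (auto simp: pos_diag_mats_def dual_order.strict_implies_not_eq)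
  then show "(w, v) \<in> K \<longleftrightarrow> w \<in> noise_region Q S z (fst v) (snd v)"
    using v by (auto simp: K_def I_def noise_region_def box pos_diag_mats_def divide_inverse mult.commute)
qed

end

theorem theorem1:
  fixes S :: "real^'m^'n"
    and p :: "real^'n \<Rightarrow> real"
    and Q :: "real^'n \<Rightarrow> 'z::countable"
  assumes p_meas: "p \<in> borel_measurable lborel"
    and p_nonneg: "\<And>w. p w \<ge> 0"
    and p_int: "integrable lborel p"
    and p_one: "integral\<^sup>L lborel p = 1"
    and p_logconcave: "logconcave_on UNIV p"
    and Q_convex: "convex_quantizer Q"
  shows "\<forall>z. (\<forall>\<Psi>0 \<in> pos_def_mats. logconcave_on UNIV (\<lambda>x. likelihood p Q S z x \<Psi>0))
          \<and> logconcave_on (UNIV \<times> {0<..}) (\<lambda>(x, \<psi>). likelihood p Q S z x (mat \<psi>))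
          \<and> ((\<forall>z'. \<exists>a b :: 'n \<Rightarrow> ereal. (\<forall>j. a j \<le> b j) \<and>
                 Q -` {z'} = {y. \<forall>j. a j \<le> ereal (y $ j) \<and> ereal (y $ j) \<le> b j})
             \<longrightarrow> logconcave_on (UNIV \<times> pos_diag_mats) (\<lambda>(x, \<Lambda>). likelihood p Q S z x \<Lambda>))"
proof (intro allI conjI impI ballI)
  fix z
  note density = p_meas p_nonneg p_int p_logconcave
  have cell: "convex (Q -` {z})" using Q_convex by (simp add: convex_quantizer_def)
  show "logconcave_on UNIV (\<lambda>x. likelihood p Q S z x \<Psi>0)" for \<Psi>0
    by (rule logconcave_likelihood_fixed_matrix[OF density cell])
  show "logconcave_on (UNIV \<times> {0<..}) (\<lambda>(x, \<psi>). likelihood p Q S z x (mat \<psi>))"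
    by (rule logconcave_likelihood_scalar_matrix[OF density cell])
  assume "\<forall>z'. \<exists>a b :: 'n \<Rightarrow> ereal. (\<forall>j. a j \<le> b j) \<and>
            Q -` {z'} = {y. \<forall>j. a j \<le> ereal (y $ j) \<and> ereal (y $ j) \<le> b j}"
  then obtain a b :: "'n \<Rightarrow> ereal" where "Q -` {z} = {y. \<forall>j. a j \<le> ereal (y $ j) \<and> ereal (y $ j) \<le> b j}"
    by blast
  then show "logconcave_on (UNIV \<times> pos_diag_mats) (\<lambda>(x, \<Lambda>). likelihood p Q S z x \<Lambda>)"
    by (rule logconcave_likelihood_diagonal_matrix[OF density])
qed

end
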